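(* Let $\mathcal G$ be an MMPG arena with leader $l$. If $\sigma^N$ is a Nash equilibrium, $\sigma^L$ is a leader equilibrium and $(\sigma^I,\gamma^I)$ is an incentive equilibrium of $\mathcal G$, then $$r_l(\sigma^N)\;\le\; r_l(\sigma^L)\;\le\; r_l(\sigma^I)-\sum_{p\in P\setminus\{l\}}\gamma^I_p(\sigma^I).$$ (Equivalently, Nash strategy profiles $\subseteq$ leader strategy profiles $\subseteq$ incentive strategy profiles, when strategy profiles are paired with the all-zero incentive profile.) Moreover, there exists an MMPG arena in which every Nash equilibrium gives the leader a strictly smaller raw payoff than every leader equilibrium, and every leader equilibrium gives the leader a strictly smaller payoff than every incentive equilibrium gives her as overall payoff.
   Context: A multi-player mean-payoff game (MMPG) arena is a tuple $\mathcal G=(P,V,(V_p)_{p\in P},v_0,E,(r_p)_{p\in P})$ where $P$ is a finite set of players containing a distinguished leader $l\in P$ (the other players are called followers), $V$ is a finite set of vertices with initial vertex $v_0\in V$, $(V_p)_{p\in P}$ is a partition of $V$ (player $p$ owns $V_p$), $E\subseteq V\times V$ is an edge set such that every vertex has at least one successor, and $r_p:E\to\mathbb Q$ is the reward function of player $p$. A history is a finite sequence $h=v_0v_1\dots v_n$ starting at $v_0$ with $(v_i,v_{i+1})\in E$ for all $i<n$; $\mathsf{last}(h)=v_n$. A play is an infinite such sequence. A strategy of player $p$ is a function $\sigma_p$ assigning to every history $h$ with $\mathsf{last}(h)\in V_p$ a vertex $v$ with $(\mathsf{last}(h),v)\in E$. A strategy profile $\sigma=(\sigma_p)_{p\in P}$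 determines a unique play $\pi_\sigma$. The raw payoff of player $p$ on a play $\pi=v_0v_1\dots$ is $r_p(\pi)=\liminf_{n\to\infty}\frac1n\sum_{i=0}^{n-1}r_p((v_i,v_{i+1}))$, and $r_p(\sigma):=r_p(\pi_\sigma)$. For a profile $\sigma$, a player $p$ and a strategy $\sigma'$ of $p$, $\sigma_{p,\sigma'}$ denotes the profile obtained from $\sigma$ by replacing $p$'s strategy with $\sigma'$. An incentive for a follower $p$ is a function $\gamma_p$ from histories to $\mathbb R_{\ge 0}$; its value on a play $\pi=v_0v_1\dots$ is $\gamma_p(\pi)=\liminf_{n\to\infty}\frac1n\sum_{i=1}^{n}\gamma_p(v_0\dots v_i)$, and $\gamma_p(\sigma):=\gamma_p(\pi_\sigma)$. An incentive profile is $\gamma=(\gamma_p)_{p\in P\setminus\{l\}}$. For a pair $(\sigma,\gamma)$, the overall payoff of a follower $p$ is $r_p(\sigma)+\gamma_p(\sigma)$ and the overall payoff of the leader is $r_l(\sigma)-\sum_{p\in P\setminus\{l\}}\gamma_p(\sigma)$. A strategy profile $\sigma$ is a Nash equilibrium if $r_p(\sigma)\ge r_p(\sigma_{p,\sigma'})$ for all players $p\in P$ and all strategies $\sigma'$ of $p$. It is a leader strategy profile if this holds for all followers $p\in P\setminus\{l\}$; a leader equilibrium is a leader strategy profile maximising $r_l$ among all leader strategy profiles. A pair $(\sigma,\gamma)$ is an incentive strategy profile (ISP) if for every follower $p$ and every strategy $\sigma'$ of $p$: $r_p(\sigma)+\gamma_p(\sigma)\ge r_p(\sigma_{p,\sigma'})+\gamma_p(\sigma_{p,\sigma'})$.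 An incentive equilibrium is an ISP whose leader overall payoff is maximal among all ISPs. *)

theory Defs
  imports Complex_Main "HOL-Library.Extended_Real"
begin

text \<open>Multi-player mean-payoff game arenas. The partition of V is given by the
family owns p = V_p. Rewards are real-valued functions required to take rational
values on edges.\<close>

record ('p, 'v) mmpg =
  players :: "'p set"
  leader  :: 'p
  verts   :: "'v set"
  owns    :: "'p \<Rightarrow> 'v set"
  init    :: 'v
  edges   :: "('v \<times> 'v) set"
  rew     :: "'p \<Rightarrow> 'v \<times> 'v \<Rightarrow> real"

definition followers :: "('p, 'v) mmpg \<Rightarrow> 'p set" where
  "followers G = players G - {leader G}"

definition wf_mmpg :: "('p, 'v) mmpg \<Rightarrow> bool" where
  "wf_mmpg G \<longleftrightarrow>
     finite (players G) \<and> leader G \<in> players G \<and>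
     finite (verts G) \<and> init G \<in> verts G \<and>
     (\<forall>p\<in>players G. owns G p \<subseteq> verts G) \<and>
     (\<forall>v\<in>verts G. \<exists>!p. p \<in> players G \<and> v \<in> owns G p) \<and>
     edges G \<subseteq> verts G \<times> verts G \<and>
     (\<forall>v\<in>verts G. \<exists>w. (v, w) \<in> edges G) \<and>
     (\<forall>p\<in>players G. \<forall>e\<in>edges G. rew G p e \<in> \<rat>)"

definition is_history :: "('p, 'v) mmpg \<Rightarrow> 'v list \<Rightarrow> bool" where
  "is_history G h \<longleftrightarrow> h \<noteq> [] \<and> hd h = init G \<and>
     (\<forall>i. Suc i < length h \<longrightarrow> (h ! i, h ! Suc i) \<in> edges G)"

definition is_strategy :: "('p, 'v) mmpg \<Rightarrow> 'p \<Rightarrow> ('v list \<Rightarrow> 'v) \<Rightarrow> bool" where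
  "is_strategy G p s \<longleftrightarrow>
     (\<forall>h. is_history G h \<and> last h \<in> owns G p \<longrightarrow> (last h, s h) \<in> edges G)"

definition is_profile :: "('p, 'v) mmpg \<Rightarrow> ('p \<Rightarrow> 'v list \<Rightarrow> 'v) \<Rightarrow> bool" where
  "is_profile G \<sigma> \<longleftrightarrow> (\<forall>p\<in>players G. is_strategy G p (\<sigma> p))"

definition owner :: "('p, 'v) mmpg \<Rightarrow> 'v \<Rightarrow> 'p" where
  "owner G v = (THE p. p \<in> players G \<and> v \<in> owns G p)"

text \<open>hist G sigma n = v0 v1 ... vn, the length-(n+1) prefix of the play of sigma.\<close>
fun hist :: "('p, 'v) mmpg \<Rightarrow> ('p \<Rightarrow> 'v list \<Rightarrow> 'v) \<Rightarrow> nat \<Rightarrow> 'v list" where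
  "hist G \<sigma> 0 = [init G]"
| "hist G \<sigma> (Suc n) = hist G \<sigma> n @ [\<sigma> (owner G (last (hist G \<sigma> n))) (hist G \<sigma> n)]"

definition play :: "('p, 'v) mmpg \<Rightarrow> ('p \<Rightarrow> 'v list \<Rightarrow> 'v) \<Rightarrow> nat \<Rightarrow> 'v" where
  "play G \<sigma> n = last (hist G \<sigma> n)"

definition raw_payoff :: "('p, 'v) mmpg \<Rightarrow> ('p \<Rightarrow> 'v list \<Rightarrow> 'v) \<Rightarrow> 'p \<Rightarrow> ereal" where
  "raw_payoff G \<sigma> p =
     liminf (\<lambda>n. ereal ((\<Sum>i<n. rew G p (play G \<sigma> i, play G \<sigma> (Suc i))) / real n))"

definition inc_value :: "('p, 'v) mmpg \<Rightarrow> ('p \<Rightarrow> 'v list \<Rightarrow> 'v) \<Rightarrow> ('v list \<Rightarrow> real) \<Rightarrow> ereal" where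
  "inc_value G \<sigma> g = liminf (\<lambda>n. ereal ((\<Sum>i\<in>{1..n}. g (hist G \<sigma> i)) / real n))"

definition is_incentive_profile :: "('p, 'v) mmpg \<Rightarrow> ('p \<Rightarrow> 'v list \<Rightarrow> real) \<Rightarrow> bool" where
  "is_incentive_profile G \<gamma> \<longleftrightarrow>
     (\<forall>p\<in>followers G. \<forall>h. is_history G h \<longrightarrow> \<gamma> p h \<ge> 0)"

definition follower_overall ::
  "('p, 'v) mmpg \<Rightarrow> ('p \<Rightarrow> 'v list \<Rightarrow> 'v) \<Rightarrow> ('p \<Rightarrow> 'v list \<Rightarrow> real) \<Rightarrow> 'p \<Rightarrow> ereal" where
  "follower_overall G \<sigma> \<gamma> p = raw_payoff G \<sigma> p + inc_value G \<sigma> (\<gamma> p)"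

definition leader_overall ::
  "('p, 'v) mmpg \<Rightarrow> ('p \<Rightarrow> 'v list \<Rightarrow> 'v) \<Rightarrow> ('p \<Rightarrow> 'v list \<Rightarrow> real) \<Rightarrow> ereal" where
  "leader_overall G \<sigma> \<gamma> =
     raw_payoff G \<sigma> (leader G) - (\<Sum>p\<in>followers G. inc_value G \<sigma> (\<gamma> p))"

definition is_nash :: "('p, 'v) mmpg \<Rightarrow> ('p \<Rightarrow> 'v list \<Rightarrow> 'v) \<Rightarrow> bool" where
  "is_nash G \<sigma> \<longleftrightarrow> is_profile G \<sigma> \<and>
     (\<forall>p\<in>players G. \<forall>s. is_strategy G p s \<longrightarrow>
        raw_payoff G (\<sigma>(p := s)) p \<le> raw_payoff G \<sigma> p)"

definition is_leader_profile :: "('p, 'v) mmpg \<Rightarrow> ('p \<Rightarrow> 'v list \<Rightarrow> 'v) \<Rightarrow> bool" where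
  "is_leader_profile G \<sigma> \<longleftrightarrow> is_profile G \<sigma> \<and>
     (\<forall>p\<in>followers G. \<forall>s. is_strategy G p s \<longrightarrow>
        raw_payoff G (\<sigma>(p := s)) p \<le> raw_payoff G \<sigma> p)"

definition is_leader_eq :: "('p, 'v) mmpg \<Rightarrow> ('p \<Rightarrow> 'v list \<Rightarrow> 'v) \<Rightarrow> bool" where
  "is_leader_eq G \<sigma> \<longleftrightarrow> is_leader_profile G \<sigma> \<and>
     (\<forall>\<sigma>'. is_leader_profile G \<sigma>' \<longrightarrow>
        raw_payoff G \<sigma>' (leader G) \<le> raw_payoff G \<sigma> (leader G))"

definition is_isp ::
  "('p, 'v) mmpg \<Rightarrow> ('p \<Rightarrow> 'v list \<Rightarrow> 'v) \<Rightarrow> ('p \<Rightarrow> 'v list \<Rightarrow> real) \<Rightarrow> bool" where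
  "is_isp G \<sigma> \<gamma> \<longleftrightarrow> is_profile G \<sigma> \<and> is_incentive_profile G \<gamma> \<and>
     (\<forall>p\<in>followers G. \<forall>s. is_strategy G p s \<longrightarrow>
        follower_overall G (\<sigma>(p := s)) \<gamma> p \<le> follower_overall G \<sigma> \<gamma> p)"

definition is_incentive_eq ::
  "('p, 'v) mmpg \<Rightarrow> ('p \<Rightarrow> 'v list \<Rightarrow> 'v) \<Rightarrow> ('p \<Rightarrow> 'v list \<Rightarrow> real) \<Rightarrow> bool" where
  "is_incentive_eq G \<sigma> \<gamma> \<longleftrightarrow> is_isp G \<sigma> \<gamma> \<and>
     (\<forall>\<sigma>' \<gamma>'. is_isp G \<sigma>' \<gamma>' \<longrightarrow> leader_overall G \<sigma>' \<gamma>' \<le> leader_overall G \<sigma> \<gamma>)"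

end

theory Submission
  imports Defs
begin

text \<open>Every Nash equilibrium is a leader strategy profile, and every leader strategy profile,
paired with the zero incentive, is an incentive strategy profile at no cost to the leader.
Maximising the leader's payoff over these nested sets gives the chain of inequalities.

For strictness take the arena in which the follower, at the initial vertex, either ends the
game in a sink worth (1,1) or hands over to the leader, who chooses between a sink worth (2,2)
and a sink worth (4,0). Without commitment the leader would pick (4,0), so the follower secures
(1,1); committing to (2,2) gives the leader 2; paying the follower 1 per step for going to the
leader, who then picks (4,0), gives the leader 4 - 1 = 3.\<close>

section \<open>Plays of a strategy profile\<close>

lemma play_0 [simp]: "play G \<sigma> 0 = init G"
  by (simp add: play_def)

lemma play_Suc: "play G \<sigma> (Suc n) = \<sigma> (owner G (play G \<sigma> n)) (hist G \<sigma> n)"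
  by (simp add: play_def)

lemma hist_eq_map_play: "hist G \<sigma> n = map (play G \<sigma>) [0..<Suc n]"
proof (induction n)
  case 0
  then show ?case by (simp add: play_def)
next
  case (Suc n)
  have "hist G \<sigma> (Suc n) = hist G \<sigma> n @ [play G \<sigma> (Suc n)]"
    by (simp add: play_def)
  then show ?case using Suc by simp
qed

lemma is_history_map_upt_iff:
  "is_history G (map f [0..<Suc n]) \<longleftrightarrow> f 0 = init G \<and> (\<forall>i<n. (f i, f (Suc i)) \<in> edges G)"
  unfolding is_history_def by (auto simp: hd_conv_nth nth_map_upt simp del: upt_Suc)

lemma owner_owns:
  assumes "wf_mmpg G" and "v \<in> verts G"
  shows "owner G v \<in> players G \<and> v \<in> owns G (owner G v)"
proof -
  have "\<exists>!p. p \<in> players G \<and> v \<in> owns G p"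
    using assms unfolding wf_mmpg_def by blast
  then show ?thesis unfolding owner_def by (rule theI')
qed

lemma play_follows_edges:
  assumes wf: "wf_mmpg G" and prof: "is_profile G \<sigma>"
  shows "play G \<sigma> n \<in> verts G \<and> (\<forall>i<n. (play G \<sigma> i, play G \<sigma> (Suc i)) \<in> edges G)"
proof (induction n)
  case 0
  then show ?case using wf by (simp add: wf_mmpg_def)
next
  case (Suc n)
  let ?p = "owner G (play G \<sigma> n)"
  have owner: "?p \<in> players G" "play G \<sigma> n \<in> owns G ?p"
    using owner_owns[OF wf] Suc.IH by blast+
  have history: "is_history G (hist G \<sigma> n)"
    unfolding hist_eq_map_play is_history_map_upt_iff using Suc.IH by simp
  have last_hist: "last (hist G \<sigma> n) = play G \<sigma> n"
    by (simp add: play_def)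
  have "is_strategy G ?p (\<sigma> ?p)"
    using prof owner unfolding is_profile_def by blast
  then have edge: "(play G \<sigma> n, play G \<sigma> (Suc n)) \<in> edges G"
    using history owner last_hist unfolding is_strategy_def play_Suc by metis
  then have "play G \<sigma> (Suc n) \<in> verts G"
    using wf unfolding wf_mmpg_def by blast
  then show ?case using Suc.IH edge by (auto simp: less_Suc_eq)
qed

lemma play_edge:
  "wf_mmpg G \<Longrightarrow> is_profile G \<sigma> \<Longrightarrow> (play G \<sigma> n, play G \<sigma> (Suc n)) \<in> edges G"
  using play_follows_edges[of G \<sigma> "Suc n"] by blast

lemma is_history_hist: "wf_mmpg G \<Longrightarrow> is_profile G \<sigma> \<Longrightarrow> is_history G (hist G \<sigma> n)"
  unfolding hist_eq_map_play is_history_map_upt_iff using play_edge by auto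

lemma play_absorbed:
  assumes wf: "wf_mmpg G" and prof: "is_profile G \<sigma>"
    and reach: "play G \<sigma> k = u" and sink: "\<And>v. (u, v) \<in> edges G \<Longrightarrow> v = u"
  shows "\<forall>i\<ge>k. play G \<sigma> i = u"
proof (intro allI impI)
  fix i
  assume "k \<le> i"
  then show "play G \<sigma> i = u"
  proof (induction i rule: dec_induct)
    case base
    then show ?case using reach by simp
  next
    case (step m)
    then show ?case using play_edge[OF wf prof, of m] sink by auto
  qed
qed

lemma is_profile_fun_upd:
  "is_profile G \<sigma> \<Longrightarrow> is_strategy G p s \<Longrightarrow> is_profile G (\<sigma>(p := s))"
  unfolding is_profile_def by auto

section \<open>Mean payoffs of eventually constant plays\<close>

lemma liminf_mean_eventually_affine:
  fixes S :: "nat \<Rightarrow> real"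
  assumes "\<forall>n\<ge>k. S n = C + real (n - k) * v"
  shows "liminf (\<lambda>n. ereal (S n / real n)) = ereal v"
proof -
  have "eventually (\<lambda>n. (C - real k * v) / real n + v = S n / real n) sequentially"
    unfolding eventually_sequentially
  proof (intro exI allI impI)
    fix n
    assume "max k 1 \<le> n"
    then show "(C - real k * v) / real n + v = S n / real n"
      using assms by (simp add: of_nat_diff field_simps)
  qed
  moreover have "(\<lambda>n. (C - real k * v) / real n + v) \<longlonglongrightarrow> 0 + v"
    by (intro tendsto_add lim_const_over_n tendsto_const)
  ultimately have "(\<lambda>n. S n / real n) \<longlonglongrightarrow> v"
    using tendsto_cong by fastforce
  then have "(\<lambda>n. ereal (S n / real n)) \<longlonglongrightarrow> ereal v"
    by (rule tendsto_ereal)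
  then show ?thesis
    by (intro lim_imp_Liminf) auto
qed

lemma raw_payoff_eventually_const:
  assumes "\<forall>i\<ge>k. play G \<sigma> i = u"
  shows "raw_payoff G \<sigma> p = ereal (rew G p (u, u))"
proof -
  let ?r = "\<lambda>i. rew G p (play G \<sigma> i, play G \<sigma> (Suc i))"
  have "\<forall>n\<ge>k. (\<Sum>i<n. ?r i) = (\<Sum>i<k. ?r i) + real (n - k) * rew G p (u, u)"
  proof (intro allI impI)
    fix n
    assume "k \<le> n"
    then show "(\<Sum>i<n. ?r i) = (\<Sum>i<k. ?r i) + real (n - k) * rew G p (u, u)"
    proof (induction n rule: dec_induct)
      case base
      then show ?case by simp
    next
      case (step m)
      then have "?r m = rew G p (u, u)" using assms by simp
      then show ?case using step by (simp add: Suc_diff_le algebra_simps)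
    qed
  qed
  then show ?thesis
    unfolding raw_payoff_def by (rule liminf_mean_eventually_affine)
qed

lemma inc_value_eventually_const:
  assumes "\<forall>i\<ge>k. g (hist G \<sigma> i) = c"
  shows "inc_value G \<sigma> g = ereal c"
proof -
  let ?g = "\<lambda>i. g (hist G \<sigma> i)"
  have "\<forall>n\<ge>k. (\<Sum>i\<in>{1..n}. ?g i) = (\<Sum>i\<in>{1..k}. ?g i) + real (n - k) * c"
  proof (intro allI impI)
    fix n
    assume "k \<le> n"
    then show "(\<Sum>i\<in>{1..n}. ?g i) = (\<Sum>i\<in>{1..k}. ?g i) + real (n - k) * c"
    proof (induction n rule: dec_induct)
      case base
      then show ?case by simp
    next
      case (step m)
      then have "?g (Suc m) = c" using assms le_SucI by blast
      then show ?case using step by (simp add: Suc_diff_le algebra_simps)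
    qed
  qed
  then show ?thesis
    unfolding inc_value_def by (rule liminf_mean_eventually_affine)
qed

lemma inc_value_nonneg:
  assumes "wf_mmpg G" "is_profile G \<sigma>" "is_incentive_profile G \<gamma>" "p \<in> followers G"
  shows "inc_value G \<sigma> (\<gamma> p) \<ge> 0"
proof -
  have "\<And>n. \<gamma> p (hist G \<sigma> n) \<ge> 0"
    using assms is_history_hist unfolding is_incentive_profile_def by blast
  then have "\<And>n. ereal ((\<Sum>i\<in>{1..n}. \<gamma> p (hist G \<sigma> i)) / real n) \<ge> 0"
    by (simp add: sum_nonneg)
  then show ?thesis
    unfolding inc_value_def by (intro Liminf_bounded) auto
qed

lemma inc_value_zero [simp]: "inc_value G \<sigma> (\<lambda>_. 0) = 0"
  unfolding inc_value_def by (simp add: zero_ereal_def[symmetric] Liminf_const)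

section \<open>Nash, leader and incentive strategy profiles\<close>

lemma nash_imp_leader_profile: "is_nash G \<sigma> \<Longrightarrow> is_leader_profile G \<sigma>"
  unfolding is_nash_def is_leader_profile_def followers_def by auto

lemma leader_profile_imp_isp_zero: "is_leader_profile G \<sigma> \<Longrightarrow> is_isp G \<sigma> (\<lambda>_ _. 0)"
  unfolding is_leader_profile_def is_isp_def is_incentive_profile_def follower_overall_def
  by auto

lemma leader_overall_zero [simp]: "leader_overall G \<sigma> (\<lambda>_ _. 0) = raw_payoff G \<sigma> (leader G)"
  unfolding leader_overall_def by simp

lemma equilibrium_leader_payoffs_mono:
  assumes "is_nash G \<sigma>N" "is_leader_eq G \<sigma>L" "is_incentive_eq G \<sigma>I \<gamma>I"
  shows "raw_payoff G \<sigma>N (leader G) \<le> raw_payoff G \<sigma>L (leader G)"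
    and "raw_payoff G \<sigma>L (leader G) \<le> leader_overall G \<sigma>I \<gamma>I"
proof -
  show "raw_payoff G \<sigma>N (leader G) \<le> raw_payoff G \<sigma>L (leader G)"
    using assms(1,2) nash_imp_leader_profile unfolding is_leader_eq_def by blast
  have "is_isp G \<sigma>L (\<lambda>_ _. 0)"
    using assms(2) leader_profile_imp_isp_zero unfolding is_leader_eq_def by blast
  then show "raw_payoff G \<sigma>L (leader G) \<le> leader_overall G \<sigma>I \<gamma>I"
    using assms(3) unfolding is_incentive_eq_def by force
qed

section \<open>An arena separating the three equilibrium notions\<close>

text \<open>Player 0 is the leader and player 1 the follower; the follower owns the initial vertex 0 and
the leader owns vertex 2. Vertices 1, 3 and 4 are the sinks worth (1,1), (2,2) and (4,0).\<close>

definition ex_reward :: "nat \<Rightarrow> nat \<Rightarrow> real" where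
  "ex_reward p u =
     (if u = 1 then 1 else if u = 3 then 2 else if u = 4 \<and> p = 0 then 4 else 0)"

definition ex_game :: "(nat, nat) mmpg" where
  "ex_game = \<lparr>players = {0, 1}, leader = 0, verts = {0, 1, 2, 3, 4},
     owns = (\<lambda>p. if p = 0 then {2, 3, 4} else if p = 1 then {0, 1} else {}), init = 0,
     edges = {(0, 1), (0, 2), (1, 1), (2, 3), (2, 4), (3, 3), (4, 4)},
     rew = (\<lambda>p e. if fst e = snd e then ex_reward p (fst e) else 0)\<rparr>"

lemma ex_game_simps:
  "players ex_game = {0, 1}" "leader ex_game = 0" "init ex_game = 0" "followers ex_game = {1}"
  "edges ex_game = {(0, 1), (0, 2), (1, 1), (2, 3), (2, 4), (3, 3), (4, 4)}"
  "rew ex_game p (u, u) = ex_reward p u"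
  "owns ex_game p = (if p = 0 then {2, 3, 4} else if p = 1 then {0, 1} else {})"
  by (auto simp: ex_game_def followers_def)

lemma wf_ex_game: "wf_mmpg ex_game"
  unfolding wf_mmpg_def by (auto simp: ex_game_def ex_reward_def)

text \<open>The play of a profile only depends on the follower's move after [0] and the leader's move
after [0, 2]; ex_sink is the sink it ends in (meaningful for profiles only).\<close>

definition ex_sink :: "(nat \<Rightarrow> nat list \<Rightarrow> nat) \<Rightarrow> nat" where
  "ex_sink \<sigma> = (if \<sigma> 1 [0] = 1 then 1 else \<sigma> 0 [0, 2])"

definition ex_choice :: "nat \<Rightarrow> nat \<Rightarrow> nat list \<Rightarrow> nat" where
  "ex_choice x y h = (if last h = 0 then x else if last h = 2 then y else last h)"

definition ex_bonus :: "nat list \<Rightarrow> real" where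
  "ex_bonus h = (if 2 \<in> set h then 1 else 0)"

lemma ex_choice_simps [simp]: "ex_choice x y [0] = x" "ex_choice x y [0, 2] = y"
  by (auto simp: ex_choice_def)

lemma is_strategy_ex_choice:
  "x \<in> {1, 2} \<Longrightarrow> y \<in> {3, 4} \<Longrightarrow> is_strategy ex_game p (ex_choice x y)"
  unfolding is_strategy_def ex_choice_def by (auto simp: ex_game_simps split: if_splits)

lemma is_profile_ex_choice: "x \<in> {1, 2} \<Longrightarrow> y \<in> {3, 4} \<Longrightarrow> is_profile ex_game (\<lambda>_. ex_choice x y)"
  unfolding is_profile_def using is_strategy_ex_choice by blast

lemma ex_owner_0: "owner ex_game 0 = 1"
  unfolding owner_def by (rule the_equality) (auto simp: ex_game_simps)

lemma ex_owner_2: "owner ex_game 2 = 0"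
  unfolding owner_def by (rule the_equality) (auto simp: ex_game_simps)

lemma ex_play_1: "play ex_game \<sigma> 1 = \<sigma> 1 [0]"
  by (simp add: play_def ex_game_simps ex_owner_0)

lemma ex_hist_1: "hist ex_game \<sigma> 1 = [0, \<sigma> 1 [0]]"
  by (simp add: ex_game_simps ex_owner_0)

lemma ex_play_2:
  assumes "\<sigma> 1 [0] = 2"
  shows "play ex_game \<sigma> 2 = \<sigma> 0 [0, 2]"
proof -
  have "play ex_game \<sigma> (Suc 1) = \<sigma> 0 [0, 2]"
    unfolding play_Suc ex_play_1 ex_hist_1 assms ex_owner_2 ..
  then show ?thesis by (simp add: numeral_2_eq_2)
qed

lemma ex_sink_cases:
  assumes prof: "is_profile ex_game \<sigma>"
  obtains "\<sigma> 1 [0] = 1" "ex_sink \<sigma> = 1"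
    | "\<sigma> 1 [0] = 2" "ex_sink \<sigma> \<in> {3, 4}"
proof -
  have "(0, \<sigma> 1 [0]) \<in> edges ex_game"
    using play_edge[OF wf_ex_game prof, of 0] ex_play_1[of \<sigma>] by (simp add: ex_game_simps)
  then consider "\<sigma> 1 [0] = 1" | "\<sigma> 1 [0] = 2"
    by (auto simp: ex_game_simps)
  then show ?thesis
  proof cases
    case 1
    then show ?thesis using that(1) by (simp add: ex_sink_def)
  next
    case 2
    have "(2, \<sigma> 0 [0, 2]) \<in> edges ex_game"
      using play_edge[OF wf_ex_game prof, of 1] 2 ex_play_1[of \<sigma>] ex_play_2[of \<sigma>, OF 2]
      by (simp add: numeral_2_eq_2)
    then have "ex_sink \<sigma> \<in> {3, 4}"
      using 2 by (auto simp: ex_sink_def ex_game_simps)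
    then show ?thesis using that(2) 2 by blast
  qed
qed

lemma ex_play_absorbed:
  assumes prof: "is_profile ex_game \<sigma>"
  shows "\<forall>i\<ge>2. play ex_game \<sigma> i = ex_sink \<sigma>"
proof -
  have sink: "v = ex_sink \<sigma>" if "ex_sink \<sigma> \<in> {1, 3, 4}" "(ex_sink \<sigma>, v) \<in> edges ex_game" for v
    using that by (auto simp: ex_game_simps)
  from prof show ?thesis
  proof (cases rule: ex_sink_cases)
    case 1
    then have "\<forall>i\<ge>1. play ex_game \<sigma> i = ex_sink \<sigma>"
      using ex_play_1[of \<sigma>] sink
      by (intro play_absorbed[OF wf_ex_game prof]) simp_all
    then show ?thesis by simp
  next
    case 2
    then show ?thesis
      using ex_play_2[of \<sigma>] sink
      by (intro play_absorbed[OF wf_ex_game prof]) (simp_all add: ex_sink_def)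
  qed
qed

lemma ex_raw_payoff:
  "is_profile ex_game \<sigma> \<Longrightarrow> raw_payoff ex_game \<sigma> p = ereal (ex_reward p (ex_sink \<sigma>))"
  using raw_payoff_eventually_const[OF ex_play_absorbed] by (simp add: ex_game_simps)

lemma ex_inc_value_bonus:
  assumes prof: "is_profile ex_game \<sigma>"
  shows "inc_value ex_game \<sigma> ex_bonus = (if ex_sink \<sigma> = 1 then 0 else 1)"
  using prof
proof (cases rule: ex_sink_cases)
  case 1
  have "play ex_game \<sigma> j \<noteq> 2" for j
  proof -
    consider "j = 0" | "j = 1" | "j \<ge> 2"
      by linarith
    then show ?thesis
      using ex_play_absorbed[OF prof] 1 ex_play_1[of \<sigma>]
      by cases (simp_all add: ex_game_simps)
  qed
  then have "\<forall>i\<ge>0. ex_bonus (hist ex_game \<sigma> i) = 0"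
    unfolding ex_bonus_def hist_eq_map_play by (auto simp del: upt_Suc)
  then show ?thesis
    using 1 inc_value_eventually_const[of 0] by (simp add: zero_ereal_def)
next
  case 2
  then have "play ex_game \<sigma> 1 = 2"
    using ex_play_1[of \<sigma>] by simp
  then have "2 \<in> set (hist ex_game \<sigma> i)" if "i \<ge> 1" for i
    using that unfolding hist_eq_map_play set_map set_upt by force
  then have "\<forall>i\<ge>1. ex_bonus (hist ex_game \<sigma> i) = 1"
    unfolding ex_bonus_def by simp
  then show ?thesis
    using 2 inc_value_eventually_const[of 1] by (auto simp: one_ereal_def)
qed

lemma ex_leader_profile_sink:
  assumes lp: "is_leader_profile ex_game \<sigma>"
  shows "ex_sink \<sigma> \<in> {1, 3}"
proof -
  have prof: "is_profile ex_game \<sigma>"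
    using lp unfolding is_leader_profile_def by blast
  have "ex_sink \<sigma> \<noteq> 4"
  proof
    assume sink: "ex_sink \<sigma> = 4"
    have dev: "is_strategy ex_game 1 (ex_choice 1 3)"
      by (rule is_strategy_ex_choice) auto
    then have "raw_payoff ex_game (\<sigma>(1 := ex_choice 1 3)) 1 \<le> raw_payoff ex_game \<sigma> 1"
      using lp unfolding is_leader_profile_def by (simp add: ex_game_simps)
    moreover have "raw_payoff ex_game (\<sigma>(1 := ex_choice 1 3)) 1 = 1"
      unfolding ex_raw_payoff[OF is_profile_fun_upd[OF prof dev]]
      by (simp add: ex_sink_def ex_reward_def)
    ultimately show False
      using ex_raw_payoff[OF prof] sink by (simp add: ex_reward_def)
  qed
  with prof show ?thesis
    by (cases rule: ex_sink_cases) auto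
qed

lemma ex_nash_payoff:
  assumes nash: "is_nash ex_game \<sigma>"
  shows "raw_payoff ex_game \<sigma> 0 = 1"
proof -
  have prof: "is_profile ex_game \<sigma>"
    using nash unfolding is_nash_def by blast
  have "ex_sink \<sigma> \<noteq> 3"
  proof
    assume sink: "ex_sink \<sigma> = 3"
    have dev: "is_strategy ex_game 0 (ex_choice 2 4)"
      by (rule is_strategy_ex_choice) auto
    then have "raw_payoff ex_game (\<sigma>(0 := ex_choice 2 4)) 0 \<le> raw_payoff ex_game \<sigma> 0"
      using nash unfolding is_nash_def by (simp add: ex_game_simps)
    moreover have "\<sigma> 1 [0] \<noteq> 1"
      using sink by (auto simp: ex_sink_def)
    ultimately show False
      using ex_raw_payoff[OF prof] ex_raw_payoff[OF is_profile_fun_upd[OF prof dev]] sink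
      by (simp add: ex_sink_def ex_reward_def)
  qed
  then have "ex_sink \<sigma> = 1"
    using ex_leader_profile_sink[OF nash_imp_leader_profile[OF nash]] by blast
  then show ?thesis
    using ex_raw_payoff[OF prof] by (simp add: ex_reward_def)
qed

lemma ex_leader_profile_payoff_le: "is_leader_profile ex_game \<sigma> \<Longrightarrow> raw_payoff ex_game \<sigma> 0 \<le> 2"
  using ex_leader_profile_sink ex_raw_payoff unfolding is_leader_profile_def
  by (fastforce simp: ex_reward_def)

lemma ex_leader_overall: "leader_overall ex_game \<sigma> \<gamma> = raw_payoff ex_game \<sigma> 0 - inc_value ex_game \<sigma> (\<gamma> 1)"
  unfolding leader_overall_def by (simp add: ex_game_simps)

text \<open>To keep the follower away from the sink 1 when the play ends in the sink 4, the leader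
must pay him at least 1 on average, which leaves her at most 4 - 1.\<close>

lemma ex_isp_payoff_le:
  assumes isp: "is_isp ex_game \<sigma> \<gamma>"
  shows "leader_overall ex_game \<sigma> \<gamma> \<le> 3"
proof -
  have prof: "is_profile ex_game \<sigma>" and ip: "is_incentive_profile ex_game \<gamma>"
    using isp unfolding is_isp_def by blast+
  have nonneg: "inc_value ex_game \<tau> (\<gamma> 1) \<ge> 0" if "is_profile ex_game \<tau>" for \<tau>
    using inc_value_nonneg[OF wf_ex_game that ip] by (simp add: ex_game_simps)
  consider "ex_sink \<sigma> \<in> {1, 3}" | "ex_sink \<sigma> = 4"
    using prof by (cases rule: ex_sink_cases) auto
  then show ?thesis
  proof cases
    case 1
    then have "raw_payoff ex_game \<sigma> 0 \<le> ereal 3"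
      using ex_raw_payoff[OF prof] by (auto simp: ex_reward_def)
    then show ?thesis
      using nonneg[OF prof] unfolding ex_leader_overall
      by (cases "inc_value ex_game \<sigma> (\<gamma> 1)"; cases "raw_payoff ex_game \<sigma> 0") auto
  next
    case 2
    let ?\<tau> = "\<sigma>(1 := ex_choice 1 3)"
    have dev: "is_strategy ex_game 1 (ex_choice 1 3)"
      by (rule is_strategy_ex_choice) auto
    then have prof': "is_profile ex_game ?\<tau>"
      by (rule is_profile_fun_upd[OF prof])
    have "follower_overall ex_game ?\<tau> \<gamma> 1 \<le> follower_overall ex_game \<sigma> \<gamma> 1"
      using isp dev unfolding is_isp_def by (simp add: ex_game_simps)
    then have "1 + inc_value ex_game ?\<tau> (\<gamma> 1) \<le> inc_value ex_game \<sigma> (\<gamma> 1)"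
      unfolding follower_overall_def ex_raw_payoff[OF prof] ex_raw_payoff[OF prof'] 2
      by (simp add: ex_sink_def ex_reward_def one_ereal_def)
    then have "inc_value ex_game \<sigma> (\<gamma> 1) \<ge> 1"
      using nonneg[OF prof']
      by (cases "inc_value ex_game ?\<tau> (\<gamma> 1)"; cases "inc_value ex_game \<sigma> (\<gamma> 1)") auto
    then show ?thesis
      using ex_raw_payoff[OF prof] 2 unfolding ex_leader_overall
      by (cases "inc_value ex_game \<sigma> (\<gamma> 1)") (auto simp: ex_reward_def)
  qed
qed

lemma ex_nash_witness: "is_nash ex_game (\<lambda>_. ex_choice 1 4)"
proof -
  let ?\<sigma> = "\<lambda>_::nat. ex_choice 1 4"
  have prof: "is_profile ex_game ?\<sigma>"
    by (rule is_profile_ex_choice) auto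
  have "raw_payoff ex_game (?\<sigma>(p := s)) p \<le> raw_payoff ex_game ?\<sigma> p"
    if "p \<in> {0, 1}" and "is_strategy ex_game p s" for p s
  proof -
    have prof': "is_profile ex_game (?\<sigma>(p := s))"
      by (rule is_profile_fun_upd[OF prof that(2)])
    have "raw_payoff ex_game ?\<sigma> p = 1"
      unfolding ex_raw_payoff[OF prof] by (simp add: ex_sink_def ex_reward_def)
    moreover from prof' have "raw_payoff ex_game (?\<sigma>(p := s)) p \<le> 1"
    proof (cases rule: ex_sink_cases)
      case 1
      then show ?thesis
        unfolding ex_raw_payoff[OF prof'] by (simp add: ex_reward_def)
    next
      case 2
      then have "p = 1" and "ex_sink (?\<sigma>(p := s)) = 4"
        using that(1) by (auto simp: ex_sink_def split: if_splits)
      then show ?thesis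
        unfolding ex_raw_payoff[OF prof'] by (simp add: ex_reward_def)
    qed
    ultimately show ?thesis by simp
  qed
  then show ?thesis
    using prof unfolding is_nash_def by (simp add: ex_game_simps)
qed

lemma ex_leader_eq_witness:
  shows "is_leader_eq ex_game (\<lambda>_. ex_choice 2 3)"
    and "raw_payoff ex_game (\<lambda>_. ex_choice 2 3) 0 = 2"
proof -
  let ?\<sigma> = "\<lambda>_::nat. ex_choice 2 3"
  have prof: "is_profile ex_game ?\<sigma>"
    by (rule is_profile_ex_choice) auto
  have payoff: "raw_payoff ex_game ?\<sigma> p = ereal (ex_reward p 3)" for p
    using ex_raw_payoff[OF prof] by (simp add: ex_sink_def)
  have "raw_payoff ex_game (?\<sigma>(1 := s)) 1 \<le> raw_payoff ex_game ?\<sigma> 1"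
    if "is_strategy ex_game 1 s" for s
  proof -
    have prof': "is_profile ex_game (?\<sigma>(1 := s))"
      by (rule is_profile_fun_upd[OF prof that])
    show ?thesis
      using ex_raw_payoff[OF prof'] unfolding payoff
      by (simp add: ex_sink_def ex_reward_def)
  qed
  then have "is_leader_profile ex_game ?\<sigma>"
    using prof unfolding is_leader_profile_def by (simp add: ex_game_simps)
  moreover show "raw_payoff ex_game ?\<sigma> 0 = 2"
    unfolding payoff by (simp add: ex_reward_def)
  ultimately show "is_leader_eq ex_game ?\<sigma>"
    unfolding is_leader_eq_def using ex_leader_profile_payoff_le by (simp add: ex_game_simps)
qed

lemma ex_incentive_eq_witness:
  shows "is_incentive_eq ex_game (\<lambda>_. ex_choice 2 4) (\<lambda>_. ex_bonus)"
    and "leader_overall ex_game (\<lambda>_. ex_choice 2 4) (\<lambda>_. ex_bonus) = 3"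
proof -
  let ?\<sigma> = "\<lambda>_::nat. ex_choice 2 4"
  have prof: "is_profile ex_game ?\<sigma>"
    by (rule is_profile_ex_choice) auto
  have payoff: "raw_payoff ex_game ?\<sigma> p = ereal (ex_reward p 4)" for p
    using ex_raw_payoff[OF prof] by (simp add: ex_sink_def)
  have bonus: "inc_value ex_game ?\<sigma> ex_bonus = 1"
    using ex_inc_value_bonus[OF prof] by (simp add: ex_sink_def)
  have "follower_overall ex_game (?\<sigma>(1 := s)) (\<lambda>_. ex_bonus) 1
          \<le> follower_overall ex_game ?\<sigma> (\<lambda>_. ex_bonus) 1"
    if "is_strategy ex_game 1 s" for s
  proof -
    have prof': "is_profile ex_game (?\<sigma>(1 := s))"
      by (rule is_profile_fun_upd[OF prof that])
    show ?thesis
      unfolding follower_overall_def ex_raw_payoff[OF prof'] ex_inc_value_bonus[OF prof']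
        payoff bonus
      by (simp add: ex_sink_def ex_reward_def)
  qed
  moreover have "is_incentive_profile ex_game (\<lambda>_. ex_bonus)"
    unfolding is_incentive_profile_def ex_bonus_def by simp
  ultimately have "is_isp ex_game ?\<sigma> (\<lambda>_. ex_bonus)"
    using prof unfolding is_isp_def by (simp add: ex_game_simps)
  moreover show "leader_overall ex_game ?\<sigma> (\<lambda>_. ex_bonus) = 3"
    unfolding ex_leader_overall payoff bonus by (simp add: ex_reward_def one_ereal_def)
  ultimately show "is_incentive_eq ex_game ?\<sigma> (\<lambda>_. ex_bonus)"
    unfolding is_incentive_eq_def using ex_isp_payoff_le by simp
qed

lemma ex_game_separates:
  assumes "is_nash ex_game \<sigma>N" "is_leader_eq ex_game \<sigma>L" "is_incentive_eq ex_game \<sigma>I \<gamma>I"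
  shows "raw_payoff ex_game \<sigma>N (leader ex_game) < raw_payoff ex_game \<sigma>L (leader ex_game)"
    and "raw_payoff ex_game \<sigma>L (leader ex_game) < leader_overall ex_game \<sigma>I \<gamma>I"
proof -
  have "raw_payoff ex_game \<sigma>N 0 = 1"
    using ex_nash_payoff[OF assms(1)] .
  moreover have "raw_payoff ex_game \<sigma>L 0 = 2"
  proof (rule antisym)
    show "raw_payoff ex_game \<sigma>L 0 \<le> 2"
      using assms(2) ex_leader_profile_payoff_le unfolding is_leader_eq_def by blast
    show "2 \<le> raw_payoff ex_game \<sigma>L 0"
      using assms(2) ex_leader_eq_witness unfolding is_leader_eq_def ex_game_simps(2) by force
  qed
  moreover have "leader_overall ex_game \<sigma>I \<gamma>I = 3"
  proof (rule antisym)
    show "leader_overall ex_game \<sigma>I \<gamma>I \<le> 3"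
      using assms(3) ex_isp_payoff_le unfolding is_incentive_eq_def by blast
    show "3 \<le> leader_overall ex_game \<sigma>I \<gamma>I"
      using assms(3) ex_incentive_eq_witness unfolding is_incentive_eq_def by force
  qed
  ultimately show "raw_payoff ex_game \<sigma>N (leader ex_game) < raw_payoff ex_game \<sigma>L (leader ex_game)"
    and "raw_payoff ex_game \<sigma>L (leader ex_game) < leader_overall ex_game \<sigma>I \<gamma>I"
    by (simp_all add: ex_game_simps)
qed

theorem theorem1:
  shows
  "(\<forall>(G :: ('p, 'v) mmpg) \<sigma>N \<sigma>L \<sigma>I \<gamma>I.
      wf_mmpg G \<longrightarrow> is_nash G \<sigma>N \<longrightarrow> is_leader_eq G \<sigma>L \<longrightarrow> is_incentive_eq G \<sigma>I \<gamma>I \<longrightarrow>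
      raw_payoff G \<sigma>N (leader G) \<le> raw_payoff G \<sigma>L (leader G) \<and>
      raw_payoff G \<sigma>L (leader G) \<le> leader_overall G \<sigma>I \<gamma>I)
 \<and> (\<forall>(G :: ('p, 'v) mmpg) \<sigma>. wf_mmpg G \<longrightarrow> is_nash G \<sigma> \<longrightarrow> is_leader_profile G \<sigma>)
 \<and> (\<forall>(G :: ('p, 'v) mmpg) \<sigma>. wf_mmpg G \<longrightarrow> is_leader_profile G \<sigma> \<longrightarrow> is_isp G \<sigma> (\<lambda>_ _. 0))
 \<and> (\<exists>G :: (nat, nat) mmpg. wf_mmpg G \<and>
      (\<exists>\<sigma>. is_nash G \<sigma>) \<and> (\<exists>\<sigma>. is_leader_eq G \<sigma>) \<and> (\<exists>\<sigma> \<gamma>. is_incentive_eq G \<sigma> \<gamma>) \<and>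
      (\<forall>\<sigma>N \<sigma>L \<sigma>I \<gamma>I. is_nash G \<sigma>N \<longrightarrow> is_leader_eq G \<sigma>L \<longrightarrow> is_incentive_eq G \<sigma>I \<gamma>I \<longrightarrow>
         raw_payoff G \<sigma>N (leader G) < raw_payoff G \<sigma>L (leader G) \<and>
         raw_payoff G \<sigma>L (leader G) < leader_overall G \<sigma>I \<gamma>I))"
proof (intro conjI)
  show "\<exists>G :: (nat, nat) mmpg. wf_mmpg G \<and>
      (\<exists>\<sigma>. is_nash G \<sigma>) \<and> (\<exists>\<sigma>. is_leader_eq G \<sigma>) \<and> (\<exists>\<sigma> \<gamma>. is_incentive_eq G \<sigma> \<gamma>) \<and>
      (\<forall>\<sigma>N \<sigma>L \<sigma>I \<gamma>I. is_nash G \<sigma>N \<longrightarrow> is_leader_eq G \<sigma>L \<longrightarrow> is_incentive_eq G \<sigma>I \<gamma>I \<longrightarrow>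
         raw_payoff G \<sigma>N (leader G) < raw_payoff G \<sigma>L (leader G) \<and>
         raw_payoff G \<sigma>L (leader G) < leader_overall G \<sigma>I \<gamma>I)"
    using wf_ex_game ex_nash_witness ex_leader_eq_witness ex_incentive_eq_witness ex_game_separates
    by blast
qed (use equilibrium_leader_payoffs_mono nash_imp_leader_profile leader_profile_imp_isp_zero in blast)+

end
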